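(* Let $G=P_n$ be a path on $n\ge3$ vertices, and let $L$ be a list-assignment with $|L(v)|\ge\deg(v)+1$ for all $v\in V(G)$. If $\alpha$ and $\beta$ are both unfrozen $L$-colourings and $\left|\bigcup_{v\in V(G)}L(v)\right|\ge4$, then $\alpha\sim\beta$.
   Context: An $L$-colouring is a proper colouring $\varphi$ with $\varphi(v)\in L(v)$ for all $v$. A vertex $v$ is frozen under $\varphi$ if every colour of $L(v)\setminus\{\varphi(v)\}$ appears on a neighbour of $v$; a colouring is unfrozen if at least one vertex is not frozen. $\alpha\sim\beta$ means $\alpha$ can be transformed into $\beta$ by a sequence of single-vertex recolouring steps, each keeping the colouring a proper $L$-colouring. *)

theory Defs
  imports Main
begin

definition path_adj :: "nat \<Rightarrow> nat \<Rightarrow> nat \<Rightarrow> bool" where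
  "path_adj n u v \<longleftrightarrow> u < n \<and> v < n \<and> (v = Suc u \<or> u = Suc v)"

definition path_verts :: "nat \<Rightarrow> nat set" where
  "path_verts n = {0..<n}"

definition degree :: "'v set \<Rightarrow> ('v \<Rightarrow> 'v \<Rightarrow> bool) \<Rightarrow> 'v \<Rightarrow> nat" where
  "degree V E v = card {u \<in> V. E v u}"

definition L_colouring ::
  "'v set \<Rightarrow> ('v \<Rightarrow> 'v \<Rightarrow> bool) \<Rightarrow> ('v \<Rightarrow> 'c set) \<Rightarrow> ('v \<Rightarrow> 'c) \<Rightarrow> bool" where
  "L_colouring V E L \<phi> \<longleftrightarrow>
     (\<forall>v\<in>V. \<phi> v \<in> L v) \<and> (\<forall>u\<in>V. \<forall>v\<in>V. E u v \<longrightarrow> \<phi> u \<noteq> \<phi> v)"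

definition frozen ::
  "'v set \<Rightarrow> ('v \<Rightarrow> 'v \<Rightarrow> bool) \<Rightarrow> ('v \<Rightarrow> 'c set) \<Rightarrow> ('v \<Rightarrow> 'c) \<Rightarrow> 'v \<Rightarrow> bool" where
  "frozen V E L \<phi> v \<longleftrightarrow> (\<forall>c \<in> L v - {\<phi> v}. \<exists>u\<in>V. E v u \<and> \<phi> u = c)"

definition unfrozen ::
  "'v set \<Rightarrow> ('v \<Rightarrow> 'v \<Rightarrow> bool) \<Rightarrow> ('v \<Rightarrow> 'c set) \<Rightarrow> ('v \<Rightarrow> 'c) \<Rightarrow> bool" where
  "unfrozen V E L \<phi> \<longleftrightarrow> (\<exists>v\<in>V. \<not> frozen V E L \<phi> v)"

(* One recolouring step: both are proper L-colourings and they agree on all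
   vertices except possibly one. Values outside V are irrelevant. *)
definition recolour_step ::
  "'v set \<Rightarrow> ('v \<Rightarrow> 'v \<Rightarrow> bool) \<Rightarrow> ('v \<Rightarrow> 'c set) \<Rightarrow> ('v \<Rightarrow> 'c) \<Rightarrow> ('v \<Rightarrow> 'c) \<Rightarrow> bool" where
  "recolour_step V E L \<alpha> \<beta> \<longleftrightarrow>
     L_colouring V E L \<alpha> \<and> L_colouring V E L \<beta> \<and>
     (\<exists>v\<in>V. \<forall>u\<in>V - {v}. \<alpha> u = \<beta> u)"

definition reconf ::
  "'v set \<Rightarrow> ('v \<Rightarrow> 'v \<Rightarrow> bool) \<Rightarrow> ('v \<Rightarrow> 'c set) \<Rightarrow> ('v \<Rightarrow> 'c) \<Rightarrow> ('v \<Rightarrow> 'c) \<Rightarrow> bool" where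
  "reconf V E L \<alpha> \<beta> \<longleftrightarrow> (recolour_step V E L)\<^sup>*\<^sup>* \<alpha> \<beta>"

end

(* Induction on the number of vertices, always splitting off the end vertex w of the path
   (the case of a special first vertex is reduced to it by reflecting the path).  Fixing the colour c
   of w, colourings of the path are colourings of the shorter path in which c is deleted from the list
   of the neighbour u of w, and these lists again have at least deg + 1 colours.

   If some list has a spare colour (at least deg + 2 colours) then any two colourings are connected:
   the spare colour lets one push the colour of w out of u's way, and the spare colour survives the
   deletion.  A colour of L(w) missing from L(u) creates such a spare colour at u.  Otherwise all lists
   are tight and L(w) = {p, q} is contained in L(u) (on three vertices such lists carry only three
   colours).  Every unfrozen colouring reaches one that ends
   in some c in L(w) and has a movable vertex other than w; for fixed c these are connected by the
   induction hypothesis as long as the shorter path keeps four colours.  This fails for at most one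
   of p, q, and the two classes are joined either by switching the colour of w or, when p and q both
   lie in the list of the vertex before u, by an explicitly constructed pair of colourings. *)

theory Submission
  imports Defs
begin

section \<open>Reconfiguration on general graphs\<close>

lemma reconf_refl: "reconf V E L \<alpha> \<alpha>"
  unfolding reconf_def by simp

lemma recolour_step_sym: "recolour_step V E L \<alpha> \<beta> \<Longrightarrow> recolour_step V E L \<beta> \<alpha>"
  unfolding recolour_step_def by metis

lemma reconf_sym: "reconf V E L \<alpha> \<beta> \<Longrightarrow> reconf V E L \<beta> \<alpha>"
  unfolding reconf_def
  by (rule sympD[OF symp_rtranclp]) (auto intro: sympI recolour_step_sym)

lemma reconf_trans: "reconf V E L \<alpha> \<beta> \<Longrightarrow> reconf V E L \<beta> \<gamma> \<Longrightarrow> reconf V E L \<alpha> \<gamma>"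
  unfolding reconf_def by (rule rtranclp_trans)

lemma reconf_L_colouring: "reconf V E L \<alpha> \<beta> \<Longrightarrow> L_colouring V E L \<alpha> \<Longrightarrow> L_colouring V E L \<beta>"
  unfolding reconf_def by (induction rule: rtranclp_induct) (auto simp: recolour_step_def)

lemma reconf_cong_lists:
  assumes "\<And>v. v \<in> V \<Longrightarrow> L v = L' v" and "reconf V E L \<alpha> \<beta>"
  shows "reconf V E L' \<alpha> \<beta>"
proof -
  have "recolour_step V E L = recolour_step V E L'"
    using assms(1) unfolding recolour_step_def L_colouring_def by (intro ext) auto
  then show ?thesis using assms(2) unfolding reconf_def by simp
qed

lemma recolour_step_automorphism:
  assumes f: "bij_betw f V V" and E: "\<And>x y. x \<in> V \<Longrightarrow> y \<in> V \<Longrightarrow> E (f x) (f y) = E x y"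
    and step: "recolour_step V E L \<alpha> \<beta>"
  shows "recolour_step V E (L \<circ> f) (\<alpha> \<circ> f) (\<beta> \<circ> f)"
proof -
  have fV: "f x \<in> V" if "x \<in> V" for x
    using f that by (auto simp: bij_betw_def)
  have col: "L_colouring V E (L \<circ> f) (\<phi> \<circ> f)" if "L_colouring V E L \<phi>" for \<phi>
    using that fV E unfolding L_colouring_def by auto
  from step obtain v where v: "v \<in> V" and agree: "\<forall>u\<in>V - {v}. \<alpha> u = \<beta> u"
    unfolding recolour_step_def by auto
  obtain x where x: "x \<in> V" "f x = v"
    using f v unfolding bij_betw_def by (metis imageE)
  have "(\<alpha> \<circ> f) y = (\<beta> \<circ> f) y" if "y \<in> V - {x}" for y
  proof -
    have "f y \<noteq> v" using that x f by (auto simp: bij_betw_def inj_on_def)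
    then show ?thesis using agree fV that by auto
  qed
  then show ?thesis using step col x(1) unfolding recolour_step_def by blast
qed

lemma reconf_automorphism:
  assumes f: "bij_betw f V V" and E: "\<And>x y. x \<in> V \<Longrightarrow> y \<in> V \<Longrightarrow> E (f x) (f y) = E x y"
    and "reconf V E L \<alpha> \<beta>"
  shows "reconf V E (L \<circ> f) (\<alpha> \<circ> f) (\<beta> \<circ> f)"
  using assms(3) unfolding reconf_def
proof (induction rule: rtranclp_induct)
  case (step \<beta> \<gamma>)
  then show ?case
    using recolour_step_automorphism[where f = f and E = E, OF f E]
    by (meson rtranclp.rtrancl_into_rtrancl)
qed simp

section \<open>Colourings of paths\<close>

abbreviation path_col :: "nat \<Rightarrow> (nat \<Rightarrow> 'c set) \<Rightarrow> (nat \<Rightarrow> 'c) \<Rightarrow> bool" where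
  "path_col n L \<alpha> \<equiv> L_colouring (path_verts n) (path_adj n) L \<alpha>"

abbreviation path_reconf :: "nat \<Rightarrow> (nat \<Rightarrow> 'c set) \<Rightarrow> (nat \<Rightarrow> 'c) \<Rightarrow> (nat \<Rightarrow> 'c) \<Rightarrow> bool" where
  "path_reconf n L \<alpha> \<beta> \<equiv> reconf (path_verts n) (path_adj n) L \<alpha> \<beta>"

lemma path_col_iff:
  "path_col n L \<alpha> \<longleftrightarrow> (\<forall>v<n. \<alpha> v \<in> L v) \<and> (\<forall>v. Suc v < n \<longrightarrow> \<alpha> v \<noteq> \<alpha> (Suc v))"
  unfolding L_colouring_def path_verts_def path_adj_def by (auto dest: Suc_lessD)

lemma path_reconf_single_vertex:
  assumes "path_col n L \<alpha>" "path_col n L \<beta>" "v < n" "\<And>x. x < n \<Longrightarrow> x \<noteq> v \<Longrightarrow> \<alpha> x = \<beta> x"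
  shows "path_reconf n L \<alpha> \<beta>"
  using assms unfolding reconf_def recolour_step_def path_verts_def
  by (intro r_into_rtranclp conjI bexI[where x = v] ballI) auto

lemma path_reconf_agree:
  assumes "path_col n L \<alpha>" "0 < n" "\<And>v. v < n \<Longrightarrow> \<beta> v = \<alpha> v"
  shows "path_reconf n L \<alpha> \<beta>"
proof -
  have "path_col n L \<beta>" using assms(1,3) unfolding path_col_iff by (metis Suc_lessD)
  then show ?thesis using assms by (intro path_reconf_single_vertex[where v = 0]) auto
qed

definition admissible :: "nat \<Rightarrow> (nat \<Rightarrow> 'c set) \<Rightarrow> (nat \<Rightarrow> 'c) \<Rightarrow> nat \<Rightarrow> 'c \<Rightarrow> bool" where
  "admissible n L \<alpha> v s \<longleftrightarrow> s \<in> L v \<and> (0 < v \<longrightarrow> \<alpha> (v - 1) \<noteq> s) \<and> (Suc v < n \<longrightarrow> \<alpha> (Suc v) \<noteq> s)"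

definition movable :: "nat \<Rightarrow> (nat \<Rightarrow> 'c set) \<Rightarrow> (nat \<Rightarrow> 'c) \<Rightarrow> nat \<Rightarrow> bool" where
  "movable n L \<alpha> v \<longleftrightarrow> (\<exists>s. admissible n L \<alpha> v s \<and> s \<noteq> \<alpha> v)"

lemma frozen_path_iff: "v < n \<Longrightarrow> frozen (path_verts n) (path_adj n) L \<alpha> v \<longleftrightarrow> \<not> movable n L \<alpha> v"
proof -
  assume v: "v < n"
  have "(\<exists>u\<in>path_verts n. path_adj n v u \<and> \<alpha> u = c) \<longleftrightarrow>
      (0 < v \<and> \<alpha> (v - 1) = c) \<or> (Suc v < n \<and> \<alpha> (Suc v) = c)" for c
    using v unfolding path_verts_def path_adj_def
    by (auto intro: bexI[where x = "v - 1"] bexI[where x = "Suc v"])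
  then show ?thesis unfolding frozen_def movable_def admissible_def by blast
qed

lemma unfrozen_path_iff: "unfrozen (path_verts n) (path_adj n) L \<alpha> \<longleftrightarrow> (\<exists>v<n. movable n L \<alpha> v)"
  unfolding unfrozen_def using frozen_path_iff[of _ n L \<alpha>] by (auto simp: path_verts_def)

lemma path_col_upd: "path_col n L \<alpha> \<Longrightarrow> admissible n L \<alpha> v s \<Longrightarrow> path_col n L (\<alpha>(v := s))"
  unfolding path_col_iff admissible_def by (metis Suc_lessD diff_Suc_1 fun_upd_apply zero_less_Suc)

lemma path_reconf_upd:
  "path_col n L \<alpha> \<Longrightarrow> v < n \<Longrightarrow> admissible n L \<alpha> v s \<Longrightarrow> path_reconf n L \<alpha> (\<alpha>(v := s))"
  by (rule path_reconf_single_vertex[where v = v]) (auto intro: path_col_upd)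

definition path_degree :: "nat \<Rightarrow> nat \<Rightarrow> nat" where
  "path_degree n v = (if 0 < v then 1 else 0) + (if Suc v < n then 1 else 0)"

lemma degree_path: "v < n \<Longrightarrow> degree (path_verts n) (path_adj n) v = path_degree n v"
proof -
  assume v: "v < n"
  have "{u \<in> path_verts n. path_adj n v u} =
      (if 0 < v then {v - 1} else {}) \<union> (if Suc v < n then {Suc v} else {})"
    using v unfolding path_verts_def path_adj_def by auto
  then show ?thesis unfolding degree_def path_degree_def by auto
qed

definition deg_plus_one :: "nat \<Rightarrow> (nat \<Rightarrow> 'c set) \<Rightarrow> bool" where
  "deg_plus_one n L \<longleftrightarrow> (\<forall>v<n. path_degree n v + 1 \<le> card (L v))"

lemma ex_not_in_of_card_less: "finite B \<Longrightarrow> card B < card A \<Longrightarrow> \<exists>x\<in>A. x \<notin> B"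
  by (meson card_mono not_le subsetI)

lemma ex_admissible_other_colour:
  assumes "path_degree n v + 2 \<le> card (L v)"
  obtains s where "admissible n L \<alpha> v s" "s \<noteq> c"
proof -
  define B where "B = {c} \<union> (if 0 < v then {\<alpha> (v - 1)} else {}) \<union> (if Suc v < n then {\<alpha> (Suc v)} else {})"
  have "finite B" "card B \<le> 1 + path_degree n v"
    unfolding B_def path_degree_def by (simp_all add: card_insert_if)
  then obtain s where "s \<in> L v" "s \<notin> B"
    using ex_not_in_of_card_less[of B "L v"] assms by force
  then show ?thesis using that unfolding B_def admissible_def by (auto split: if_splits)
qed

lemma ex_colour_avoiding_right:
  assumes "deg_plus_one n L" "0 < v" "v < n"
  obtains e where "e \<in> L v" "e \<noteq> c" "Suc v < n \<longrightarrow> \<alpha> (Suc v) \<noteq> e"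
proof -
  define B where "B = {c} \<union> (if Suc v < n then {\<alpha> (Suc v)} else {})"
  have "finite B" "card B \<le> path_degree n v"
    using assms(2) unfolding B_def path_degree_def by (simp_all add: card_insert_if)
  then obtain e where "e \<in> L v" "e \<notin> B"
    using ex_not_in_of_card_less[of B "L v"] assms unfolding deg_plus_one_def by fastforce
  then show ?thesis using that unfolding B_def by (auto split: if_splits)
qed

lemma movable_if_neighbours_share_colour:
  assumes "deg_plus_one n L" "0 < v" "Suc v < n" "\<alpha> (v - 1) = \<alpha> (Suc v)"
  shows "movable n L \<alpha> v"
proof -
  obtain e where "e \<in> L v" "e \<noteq> \<alpha> v" "\<alpha> (Suc v) \<noteq> e"
    using ex_colour_avoiding_right[OF assms(1,2) Suc_lessD[OF assms(3)], of "\<alpha> v" \<alpha>] assms(3) by auto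
  then show ?thesis
    using assms(4) unfolding movable_def admissible_def by auto
qed

definition mirror :: "nat \<Rightarrow> nat \<Rightarrow> nat" where
  "mirror n v = n - 1 - v"

lemma mirror_mirror: "v < n \<Longrightarrow> mirror n (mirror n v) = v"
  unfolding mirror_def by simp

lemma bij_betw_mirror: "bij_betw (mirror n) (path_verts n) (path_verts n)"
  by (rule bij_betw_byWitness[where f' = "mirror n"]) (auto simp: mirror_def path_verts_def)

lemma path_adj_mirror:
  "x \<in> path_verts n \<Longrightarrow> y \<in> path_verts n \<Longrightarrow> path_adj n (mirror n x) (mirror n y) = path_adj n x y"
  unfolding mirror_def path_verts_def path_adj_def by auto

lemma path_col_mirror: "path_col n L \<alpha> \<Longrightarrow> path_col n (L \<circ> mirror n) (\<alpha> \<circ> mirror n)"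
  using bij_betw_apply[OF bij_betw_mirror] path_adj_mirror unfolding L_colouring_def by auto

lemma path_degree_mirror: "v < n \<Longrightarrow> path_degree n (mirror n v) = path_degree n v"
  unfolding path_degree_def mirror_def by auto

lemma deg_plus_one_mirror: "deg_plus_one n L \<Longrightarrow> deg_plus_one n (L \<circ> mirror n)"
proof (unfold deg_plus_one_def, intro allI impI)
  fix v assume "\<forall>v<n. path_degree n v + 1 \<le> card (L v)" "v < n"
  moreover have "mirror n v < n" using \<open>v < n\<close> unfolding mirror_def by simp
  ultimately show "path_degree n v + 1 \<le> card ((L \<circ> mirror n) v)"
    using path_degree_mirror[of v n] by fastforce
qed

lemma path_reconf_of_mirror:
  assumes r: "path_reconf n (L \<circ> mirror n) (\<alpha> \<circ> mirror n) (\<beta> \<circ> mirror n)"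
    and \<alpha>: "path_col n L \<alpha>" and n: "0 < n"
  shows "path_reconf n L \<alpha> \<beta>"
proof -
  let ?\<alpha>' = "\<alpha> \<circ> mirror n \<circ> mirror n" and ?\<beta>' = "\<beta> \<circ> mirror n \<circ> mirror n"
  have "path_reconf n (L \<circ> mirror n \<circ> mirror n) ?\<alpha>' ?\<beta>'"
    by (rule reconf_automorphism[OF bij_betw_mirror path_adj_mirror r])
  then have r': "path_reconf n L ?\<alpha>' ?\<beta>'"
    by (rule reconf_cong_lists[rotated]) (simp add: path_verts_def mirror_mirror)
  have \<alpha>\<alpha>': "path_reconf n L \<alpha> ?\<alpha>'"
    using \<alpha> n by (rule path_reconf_agree) (simp add: mirror_mirror)
  have "path_col n L ?\<beta>'"
    using reconf_L_colouring[OF reconf_trans[OF \<alpha>\<alpha>' r'] \<alpha>] .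
  then have "path_reconf n L ?\<beta>' \<beta>"
    using n by (rule path_reconf_agree) (simp add: mirror_mirror)
  then show ?thesis using \<alpha>\<alpha>' r' reconf_trans by blast
qed

section \<open>Splitting off the end vertex\<close>

abbreviation remove_colour :: "('v \<Rightarrow> 'c set) \<Rightarrow> 'v \<Rightarrow> 'c \<Rightarrow> 'v \<Rightarrow> 'c set" where
  "remove_colour L v c \<equiv> L(v := L v - {c})"

lemma path_col_remove_last:
  "path_col (Suc (Suc k)) L \<gamma> \<Longrightarrow> path_col (Suc k) (remove_colour L k (\<gamma> (Suc k))) \<gamma>"
  unfolding path_col_iff by auto

lemma path_col_extend_last:
  assumes "path_col (Suc k) (remove_colour L k c) \<gamma>" "c \<in> L (Suc k)"
  shows "path_col (Suc (Suc k)) L (\<gamma>(Suc k := c))"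
  using assms unfolding path_col_iff by (auto simp: less_Suc_eq split: if_splits)

lemma path_reconf_extend_last:
  assumes "path_reconf (Suc k) (remove_colour L k c) \<gamma> \<delta>" "c \<in> L (Suc k)"
  shows "path_reconf (Suc (Suc k)) L (\<gamma>(Suc k := c)) (\<delta>(Suc k := c))"
  using assms(1) unfolding reconf_def
proof (induction rule: rtranclp_induct)
  case (step \<delta> \<epsilon>)
  from step.hyps(2) obtain v where v: "v < Suc k" "\<forall>x<Suc k. x \<noteq> v \<longrightarrow> \<delta> x = \<epsilon> x"
    unfolding recolour_step_def path_verts_def by auto
  have "path_col (Suc (Suc k)) L (\<delta>(Suc k := c))" "path_col (Suc (Suc k)) L (\<epsilon>(Suc k := c))"
    using step.hyps(2) path_col_extend_last[of k L c, OF _ assms(2)] unfolding recolour_step_def by auto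
  moreover have "\<forall>x\<in>path_verts (Suc (Suc k)) - {v}. (\<delta>(Suc k := c)) x = (\<epsilon>(Suc k := c)) x"
    using v(2) by (auto simp: path_verts_def less_Suc_eq)
  moreover have "v \<in> path_verts (Suc (Suc k))"
    using v(1) by (simp add: path_verts_def)
  ultimately have "recolour_step (path_verts (Suc (Suc k))) (path_adj (Suc (Suc k))) L
      (\<delta>(Suc k := c)) (\<epsilon>(Suc k := c))"
    unfolding recolour_step_def by blast
  with step.IH show ?case by (meson rtranclp.rtrancl_into_rtrancl)
qed simp

corollary path_reconf_lift_last:
  assumes "path_reconf (Suc k) (remove_colour L k c) \<gamma> \<delta>" "c \<in> L (Suc k)"
    and "\<gamma> (Suc k) = c" "\<delta> (Suc k) = c"
  shows "path_reconf (Suc (Suc k)) L \<gamma> \<delta>"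
  using path_reconf_extend_last[OF assms(1,2)] assms(3,4) by (metis fun_upd_triv)

lemma movable_remove_last:
  assumes "movable (Suc (Suc k)) L \<gamma> v" "v \<le> k"
  shows "movable (Suc k) (remove_colour L k (\<gamma> (Suc k))) \<gamma> v"
  using assms unfolding movable_def admissible_def by (auto simp: le_less)

lemma card_remove_last_slack:
  assumes "v \<le> k"
  shows "card (L v) + path_degree (Suc k) v \<le> card (remove_colour L k c v) + path_degree (Suc (Suc k)) v"
proof (cases "v = k")
  case True
  then show ?thesis
    using card_Diff_singleton_if[of "L k" c] unfolding path_degree_def by auto
next
  case False
  then show ?thesis using assms unfolding path_degree_def by simp
qed

lemma deg_plus_one_remove_last:
  assumes "deg_plus_one (Suc (Suc k)) L"
  shows "deg_plus_one (Suc k) (remove_colour L k c)"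
  unfolding deg_plus_one_def
proof (intro allI impI)
  fix v assume "v < Suc k"
  then have "path_degree (Suc (Suc k)) v + 1 \<le> card (L v)" "v \<le> k"
    using assms unfolding deg_plus_one_def by simp_all
  then show "path_degree (Suc k) v + 1 \<le> card (remove_colour L k c v)"
    using card_remove_last_slack[of v k L c] by linarith
qed

section \<open>A list with a spare colour\<close>

lemma path_reconf_avoid_colour_from_rich:
  assumes L: "deg_plus_one n L" and r: "path_degree n r + 2 \<le> card (L r)"
  shows "r \<le> j \<Longrightarrow> j < n \<Longrightarrow> path_col n L \<alpha> \<Longrightarrow>
    \<exists>\<alpha>'. path_reconf n L \<alpha> \<alpha>' \<and> \<alpha>' j \<noteq> c \<and> (\<forall>v. j < v \<longrightarrow> \<alpha>' v = \<alpha> v)"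
proof (induction j arbitrary: \<alpha> c rule: dec_induct)
  case base
  obtain s where s: "admissible n L \<alpha> r s" "s \<noteq> c"
    using ex_admissible_other_colour[where n = n and v = r and L = L, OF r] .
  have "path_reconf n L \<alpha> (\<alpha>(r := s))"
    using path_reconf_upd[OF base(2,1) s(1)] .
  moreover have "(\<alpha>(r := s)) r \<noteq> c" "\<forall>v. r < v \<longrightarrow> (\<alpha>(r := s)) v = \<alpha> v"
    using s(2) by auto
  ultimately show ?case by blast
next
  case (step j)
  obtain e where e: "e \<in> L (Suc j)" "e \<noteq> c" "Suc (Suc j) < n \<longrightarrow> \<alpha> (Suc (Suc j)) \<noteq> e"
    using ex_colour_avoiding_right[OF L _ step.prems(1)] by blast
  obtain \<alpha>1 where \<alpha>1: "path_reconf n L \<alpha> \<alpha>1" "\<alpha>1 j \<noteq> e" "\<forall>v. j < v \<longrightarrow> \<alpha>1 v = \<alpha> v"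
    using step.IH[of \<alpha> e] step.prems by auto
  have "admissible n L \<alpha>1 (Suc j) e"
    using e \<alpha>1 unfolding admissible_def by auto
  then have "path_reconf n L \<alpha>1 (\<alpha>1(Suc j := e))"
    using path_reconf_upd[OF reconf_L_colouring[OF \<alpha>1(1) step.prems(2)] step.prems(1)] by simp
  then have "path_reconf n L \<alpha> (\<alpha>1(Suc j := e))"
    using \<alpha>1(1) reconf_trans by blast
  moreover have "(\<alpha>1(Suc j := e)) (Suc j) \<noteq> c" "\<forall>v. Suc j < v \<longrightarrow> (\<alpha>1(Suc j := e)) v = \<alpha> v"
    using \<alpha>1(3) e(2) by auto
  ultimately show ?case by blast
qed

text \<open>Push \<open>\<beta>\<close>'s end colour \<open>c\<close> away from the penultimate vertex, give the end vertex colour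
  \<open>c\<close> and recurse with \<open>c\<close> deleted from the penultimate list; \<open>r\<close> keeps its spare colour.\<close>

lemma path_reconf_of_rich_vertex_step:
  fixes L :: "nat \<Rightarrow> 'c set"
  assumes IH: "\<And>(L' :: nat \<Rightarrow> 'c set) \<alpha>' \<beta>'. deg_plus_one (Suc k) L' \<Longrightarrow> path_degree (Suc k) r + 2 \<le> card (L' r) \<Longrightarrow>
      path_col (Suc k) L' \<alpha>' \<Longrightarrow> path_col (Suc k) L' \<beta>' \<Longrightarrow> path_reconf (Suc k) L' \<alpha>' \<beta>'"
    and L: "deg_plus_one (Suc (Suc k)) L"
    and r: "r \<le> k" "path_degree (Suc (Suc k)) r + 2 \<le> card (L r)"
    and \<alpha>: "path_col (Suc (Suc k)) L \<alpha>" and \<beta>: "path_col (Suc (Suc k)) L \<beta>"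
  shows "path_reconf (Suc (Suc k)) L \<alpha> \<beta>"
proof -
  define c where "c = \<beta> (Suc k)"
  obtain \<alpha>1 where \<alpha>1: "path_reconf (Suc (Suc k)) L \<alpha> \<alpha>1" "\<alpha>1 k \<noteq> c"
    using path_reconf_avoid_colour_from_rich[OF L r(2) r(1) _ \<alpha>, of c] by auto
  have "admissible (Suc (Suc k)) L \<alpha>1 (Suc k) c"
    using \<beta> \<alpha>1(2) unfolding c_def path_col_iff admissible_def by simp
  then have \<alpha>2: "path_reconf (Suc (Suc k)) L \<alpha>1 (\<alpha>1(Suc k := c))"
    using path_reconf_upd[OF reconf_L_colouring[OF \<alpha>1(1) \<alpha>]] by simp
  have "path_col (Suc k) (remove_colour L k c) (\<alpha>1(Suc k := c))"
    using path_col_remove_last[OF reconf_L_colouring[OF \<alpha>2 reconf_L_colouring[OF \<alpha>1(1) \<alpha>]]] by simp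
  moreover have "path_col (Suc k) (remove_colour L k c) \<beta>"
    using path_col_remove_last[OF \<beta>] by (simp add: c_def)
  moreover have "path_degree (Suc k) r + 2 \<le> card (remove_colour L k c r)"
    using card_remove_last_slack[OF r(1), of L c] r(2) by linarith
  ultimately have "path_reconf (Suc k) (remove_colour L k c) (\<alpha>1(Suc k := c)) \<beta>"
    using IH[OF deg_plus_one_remove_last[OF L]] by blast
  then have "path_reconf (Suc (Suc k)) L (\<alpha>1(Suc k := c)) \<beta>"
    by (rule path_reconf_lift_last) (use \<beta> in \<open>auto simp: c_def path_col_iff\<close>)
  then show ?thesis using \<alpha>1(1) \<alpha>2 reconf_trans by blast
qed

theorem path_reconf_of_rich_vertex:
  fixes L :: "nat \<Rightarrow> 'c set"
  assumes "deg_plus_one n L" "r < n" "path_degree n r + 2 \<le> card (L r)"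
    and "path_col n L \<alpha>" "path_col n L \<beta>"
  shows "path_reconf n L \<alpha> \<beta>"
  using assms
proof (induction n arbitrary: L r \<alpha> \<beta>)
  case 0
  then show ?case by simp
next
  case (Suc n)
  consider (single) "n = 0" | (interior) k where "n = Suc k" "r \<le> k" | (last) k where "n = Suc k" "r = Suc k"
    using Suc.prems(2) by (cases n) (auto simp: less_Suc_eq)
  then show ?case
  proof cases
    case single
    then show ?thesis using Suc.prems by (intro path_reconf_single_vertex[where v = 0]) auto
  next
    case (interior k)
    have IH: "path_reconf (Suc k) L' \<alpha>' \<beta>'"
      if "deg_plus_one (Suc k) L'" "path_degree (Suc k) r + 2 \<le> card (L' r)"
        "path_col (Suc k) L' \<alpha>'" "path_col (Suc k) L' \<beta>'" for L' :: "nat \<Rightarrow> 'c set" and \<alpha>' \<beta>'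
      using Suc.IH[of L' r \<alpha>' \<beta>'] that interior by simp
    show ?thesis
      using path_reconf_of_rich_vertex_step[OF IH] interior Suc.prems by simp
  next
    case (last k)
    let ?m = "mirror (Suc n)"
    have IH: "path_reconf (Suc k) L' \<alpha>' \<beta>'"
      if "deg_plus_one (Suc k) L'" "path_degree (Suc k) 0 + 2 \<le> card (L' 0)"
        "path_col (Suc k) L' \<alpha>'" "path_col (Suc k) L' \<beta>'" for L' :: "nat \<Rightarrow> 'c set" and \<alpha>' \<beta>'
      using Suc.IH[of L' 0 \<alpha>' \<beta>'] that last by simp
    have "?m 0 = r" using last by (simp add: mirror_def)
    then have "path_degree (Suc n) 0 + 2 \<le> card ((L \<circ> ?m) 0)"
      using Suc.prems(3) path_degree_mirror[of 0 "Suc n"] by simp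
    then have "path_reconf (Suc n) (L \<circ> ?m) (\<alpha> \<circ> ?m) (\<beta> \<circ> ?m)"
      unfolding last(1)
      by (intro path_reconf_of_rich_vertex_step[OF IH _ le0] deg_plus_one_mirror path_col_mirror)
        (use Suc.prems last in simp_all)
    then show ?thesis using path_reconf_of_mirror Suc.prems(4) by blast
  qed
qed

lemma path_reconf_to_end_colour:
  assumes "path_col (Suc (Suc k)) L \<gamma>" "p \<in> L (Suc k)" "p \<notin> L k"
  shows "path_reconf (Suc (Suc k)) L \<gamma> (\<gamma>(Suc k := p))"
proof -
  have "admissible (Suc (Suc k)) L \<gamma> (Suc k) p"
    using assms unfolding path_col_iff admissible_def by auto
  then show ?thesis using assms(1) by (intro path_reconf_upd) auto
qed

theorem path_reconf_of_private_end_colour: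
  assumes L: "deg_plus_one (Suc (Suc k)) L" and p: "p \<in> L (Suc k)" "p \<notin> L k"
    and \<alpha>: "path_col (Suc (Suc k)) L \<alpha>" and \<beta>: "path_col (Suc (Suc k)) L \<beta>"
  shows "path_reconf (Suc (Suc k)) L \<alpha> \<beta>"
proof -
  have \<alpha>p: "path_reconf (Suc (Suc k)) L \<alpha> (\<alpha>(Suc k := p))"
    using path_reconf_to_end_colour[OF \<alpha> p] .
  have \<beta>p: "path_reconf (Suc (Suc k)) L \<beta> (\<beta>(Suc k := p))"
    using path_reconf_to_end_colour[OF \<beta> p] .
  have "path_col (Suc k) (remove_colour L k p) (\<alpha>(Suc k := p))"
    using path_col_remove_last[OF reconf_L_colouring[OF \<alpha>p \<alpha>]] by simp
  moreover have "path_col (Suc k) (remove_colour L k p) (\<beta>(Suc k := p))"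
    using path_col_remove_last[OF reconf_L_colouring[OF \<beta>p \<beta>]] by simp
  moreover have "path_degree (Suc (Suc k)) k + 1 \<le> card (L k)"
    using L unfolding deg_plus_one_def by simp
  then have "path_degree (Suc k) k + 2 \<le> card (remove_colour L k p k)"
    using p(2) unfolding path_degree_def by simp
  ultimately have "path_reconf (Suc k) (remove_colour L k p) (\<alpha>(Suc k := p)) (\<beta>(Suc k := p))"
    by (intro path_reconf_of_rich_vertex[OF deg_plus_one_remove_last[OF L] lessI])
  then have "path_reconf (Suc (Suc k)) L (\<alpha>(Suc k := p)) (\<beta>(Suc k := p))"
    by (rule path_reconf_lift_last) (use p(1) in simp_all)
  then show ?thesis
    using reconf_trans[OF reconf_trans[OF \<alpha>p] reconf_sym[OF \<beta>p]] by blast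
qed

corollary path_reconf_of_private_start_colour:
  assumes L: "deg_plus_one (Suc (Suc k)) L" and p: "p \<in> L 0" "p \<notin> L 1"
    and \<alpha>: "path_col (Suc (Suc k)) L \<alpha>" and \<beta>: "path_col (Suc (Suc k)) L \<beta>"
  shows "path_reconf (Suc (Suc k)) L \<alpha> \<beta>"
proof -
  let ?m = "mirror (Suc (Suc k))"
  have "p \<in> (L \<circ> ?m) (Suc k)" "p \<notin> (L \<circ> ?m) k"
    using p by (simp_all add: mirror_def)
  then have "path_reconf (Suc (Suc k)) (L \<circ> ?m) (\<alpha> \<circ> ?m) (\<beta> \<circ> ?m)"
    using path_reconf_of_private_end_colour[OF deg_plus_one_mirror[OF L] _ _
      path_col_mirror[OF \<alpha>] path_col_mirror[OF \<beta>]] by blast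
  then show ?thesis using path_reconf_of_mirror[OF _ \<alpha>] by simp
qed

section \<open>Tight lists\<close>

text \<open>Some colour of \<open>L (Suc i)\<close> avoids the colours of \<open>Suc i\<close> and of its right neighbour; if
  \<open>Suc i\<close> is frozen this colour sits on \<open>i\<close>, so recolouring \<open>i\<close> sets \<open>Suc i\<close> free.\<close>

lemma path_reconf_shift_movable:
  assumes L: "deg_plus_one n L" and \<alpha>: "path_col n L \<alpha>"
    and i: "movable n L \<alpha> i" "Suc i < n"
  shows "\<exists>\<beta>. path_reconf n L \<alpha> \<beta> \<and> movable n L \<beta> (Suc i) \<and> (\<forall>v. Suc i \<le> v \<longrightarrow> \<beta> v = \<alpha> v)"
proof (cases "movable n L \<alpha> (Suc i)")
  case True
  then show ?thesis using reconf_refl by blast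
next
  case False
  obtain s where s: "admissible n L \<alpha> i s" "s \<noteq> \<alpha> i"
    using i(1) unfolding movable_def by blast
  obtain x where x: "x \<in> L (Suc i)" "x \<noteq> \<alpha> (Suc i)" "Suc (Suc i) < n \<longrightarrow> \<alpha> (Suc (Suc i)) \<noteq> x"
    using ex_colour_avoiding_right[OF L _ i(2)] by blast
  have "\<alpha> i = x"
    using False x unfolding movable_def admissible_def by auto
  then have "movable n L (\<alpha>(i := s)) (Suc i)"
    using x s(2) unfolding movable_def admissible_def by auto
  moreover have "path_reconf n L \<alpha> (\<alpha>(i := s))"
    using path_reconf_upd[OF \<alpha> _ s(1)] i(2) by simp
  moreover have "\<forall>v. Suc i \<le> v \<longrightarrow> (\<alpha>(i := s)) v = \<alpha> v"
    by simp
  ultimately show ?thesis by blast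
qed

lemma path_reconf_shift_movable_to:
  assumes L: "deg_plus_one n L"
  shows "i \<le> j \<Longrightarrow> j < n \<Longrightarrow> path_col n L \<alpha> \<Longrightarrow> movable n L \<alpha> i \<Longrightarrow>
    \<exists>\<beta>. path_reconf n L \<alpha> \<beta> \<and> movable n L \<beta> j \<and> (\<forall>v. j \<le> v \<longrightarrow> \<beta> v = \<alpha> v)"
proof (induction j rule: dec_induct)
  case base
  then show ?case using reconf_refl by blast
next
  case (step j)
  obtain \<beta> where \<beta>: "path_reconf n L \<alpha> \<beta>" "movable n L \<beta> j" "\<forall>v. j \<le> v \<longrightarrow> \<beta> v = \<alpha> v"
    using step by auto
  obtain \<gamma> where \<gamma>: "path_reconf n L \<beta> \<gamma>" "movable n L \<gamma> (Suc j)" "\<forall>v. Suc j \<le> v \<longrightarrow> \<gamma> v = \<beta> v"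
    using path_reconf_shift_movable[OF L reconf_L_colouring[OF \<beta>(1) step.prems(2)] \<beta>(2) step.prems(1)]
    by blast
  have "path_reconf n L \<alpha> \<gamma>"
    using reconf_trans[OF \<beta>(1) \<gamma>(1)] .
  moreover have "\<forall>v. Suc j \<le> v \<longrightarrow> \<gamma> v = \<alpha> v"
    using \<beta>(3) \<gamma>(3) by simp
  ultimately show ?case using \<gamma>(2) by blast
qed

lemma extend_path_colouring:
  assumes "\<forall>v<k. 2 \<le> card (L v)"
    and "\<forall>v. k \<le> v \<longrightarrow> v < n \<longrightarrow> \<theta> v \<in> L v"
    and "\<forall>v. k \<le> v \<longrightarrow> Suc v < n \<longrightarrow> \<theta> v \<noteq> \<theta> (Suc v)"
  shows "\<exists>\<theta>'. path_col n L \<theta>' \<and> (\<forall>v. k \<le> v \<longrightarrow> \<theta>' v = \<theta> v)"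
  using assms
proof (induction k arbitrary: \<theta>)
  case 0
  then show ?case unfolding path_col_iff by (intro exI[where x = \<theta>]) simp
next
  case (Suc k)
  have "card {\<theta> (Suc k)} < card (L k)"
    using Suc.prems(1)[rule_format, OF lessI] by simp
  then obtain a where a: "a \<in> L k" "a \<noteq> \<theta> (Suc k)"
    using ex_not_in_of_card_less[of "{\<theta> (Suc k)}"] by auto
  have "(\<theta>(k := a)) v \<in> L v" if "k \<le> v" "v < n" for v
    using Suc.prems(2) a(1) that by (cases "v = k") auto
  moreover have "(\<theta>(k := a)) v \<noteq> (\<theta>(k := a)) (Suc v)" if "k \<le> v" "Suc v < n" for v
    using Suc.prems(3) a(2) that by (cases "v = k") auto
  ultimately obtain \<theta>' where "path_col n L \<theta>'" "\<forall>v. k \<le> v \<longrightarrow> \<theta>' v = (\<theta>(k := a)) v"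
    using Suc.IH[of "\<theta>(k := a)"] Suc.prems(1) by auto
  then show ?case by auto
qed

text \<open>With \<open>c\<close> deleted from the list of the neighbour of \<open>w\<close>, these colourings restrict to
  unfrozen colourings of the path without \<open>w\<close>.\<close>

definition unfrozen_off_end :: "nat \<Rightarrow> (nat \<Rightarrow> 'c set) \<Rightarrow> 'c \<Rightarrow> (nat \<Rightarrow> 'c) \<Rightarrow> bool" where
  "unfrozen_off_end w L c \<gamma> \<longleftrightarrow> path_col (Suc w) L \<gamma> \<and> \<gamma> w = c \<and> (\<exists>v<w. movable (Suc w) L \<gamma> v)"

locale tight_path =
  fixes t :: nat and L :: "nat \<Rightarrow> 'c set"
  assumes card_lists:
      "\<And>v. v < Suc (Suc (Suc (Suc t))) \<Longrightarrow> card (L v) = path_degree (Suc (Suc (Suc (Suc t)))) v + 1"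
    and end_nested: "L (Suc (Suc (Suc t))) \<subseteq> L (Suc (Suc t))"
    and many_colours: "4 \<le> card (\<Union>v<Suc (Suc (Suc (Suc t))). L v)"
    and shorter_paths: "\<And>(L' :: nat \<Rightarrow> 'c set) \<alpha> \<beta>. deg_plus_one (Suc (Suc (Suc t))) L' \<Longrightarrow>
      4 \<le> card (\<Union>v<Suc (Suc (Suc t)). L' v) \<Longrightarrow>
      path_col (Suc (Suc (Suc t))) L' \<alpha> \<Longrightarrow> path_col (Suc (Suc (Suc t))) L' \<beta> \<Longrightarrow>
      \<exists>v<Suc (Suc (Suc t)). movable (Suc (Suc (Suc t))) L' \<alpha> v \<Longrightarrow>
      \<exists>v<Suc (Suc (Suc t)). movable (Suc (Suc (Suc t))) L' \<beta> v \<Longrightarrow>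
      path_reconf (Suc (Suc (Suc t))) L' \<alpha> \<beta>"
begin

abbreviation m where "m \<equiv> Suc t"
abbreviation u where "u \<equiv> Suc m"
abbreviation w where "w \<equiv> Suc u"

lemma card_w: "card (L w) = 2"
  using card_lists[of w] by (simp add: path_degree_def)

lemma card_u: "card (L u) = 3"
  using card_lists[of u] by (simp add: path_degree_def)

lemma card_m: "card (L m) = 3"
  using card_lists[of m] by (simp add: path_degree_def)

lemma deg_plus_one_lists: "deg_plus_one (Suc w) L"
  using card_lists by (simp add: deg_plus_one_def)

lemma two_le_card_lists: "v < Suc w \<Longrightarrow> 2 \<le> card (L v)"
  using card_lists[of v] by (simp add: path_degree_def)

lemma finite_lists: "v < Suc w \<Longrightarrow> finite (L v)"
  by (rule card_ge_0_finite) (use two_le_card_lists[of v] in simp)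

text \<open>If only \<open>w\<close> is movable, moving it leaves its old colour free for \<open>u\<close>.\<close>

lemma reach_unfrozen_off_end:
  assumes \<alpha>: "path_col (Suc w) L \<alpha>" and unfrozen: "\<exists>v<Suc w. movable (Suc w) L \<alpha> v"
  shows "\<exists>c \<gamma>. unfrozen_off_end w L c \<gamma> \<and> path_reconf (Suc w) L \<alpha> \<gamma>"
proof (cases "\<exists>v<w. movable (Suc w) L \<alpha> v")
  case True
  then have "unfrozen_off_end w L (\<alpha> w) \<alpha>"
    using \<alpha> unfolding unfrozen_off_end_def by blast
  then show ?thesis using reconf_refl by blast
next
  case False
  obtain v where "v < Suc w" "movable (Suc w) L \<alpha> v"
    using unfrozen by blast
  with False have "movable (Suc w) L \<alpha> w"
    by (metis less_SucE)
  then obtain s where s: "admissible (Suc w) L \<alpha> w s" "s \<noteq> \<alpha> w"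
    unfolding movable_def by blast
  have "\<not> movable (Suc w) L \<alpha> u"
    using False by blast
  then have "\<alpha> m \<noteq> \<alpha> w"
    using movable_if_neighbours_share_colour[OF deg_plus_one_lists, of u \<alpha>] by auto
  moreover have "\<alpha> w \<in> L u" "\<alpha> u \<noteq> \<alpha> w"
    using \<alpha> end_nested unfolding path_col_iff by auto
  ultimately have "admissible (Suc w) L (\<alpha>(w := s)) u (\<alpha> w)"
    using s(2) unfolding admissible_def by simp
  then have "movable (Suc w) L (\<alpha>(w := s)) u"
    using \<open>\<alpha> u \<noteq> \<alpha> w\<close> unfolding movable_def by auto
  moreover have "path_col (Suc w) L (\<alpha>(w := s))"
    using path_col_upd[OF \<alpha> s(1)] .
  ultimately have "unfrozen_off_end w L s (\<alpha>(w := s))"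
    unfolding unfrozen_off_end_def by auto
  moreover have "path_reconf (Suc w) L \<alpha> (\<alpha>(w := s))"
    using path_reconf_upd[OF \<alpha> _ s(1)] by simp
  ultimately show ?thesis by blast
qed

lemma unfrozen_off_end_connected:
  assumes many: "4 \<le> card (\<Union>v<w. remove_colour L u c v)"
    and \<gamma>: "unfrozen_off_end w L c \<gamma>" and \<delta>: "unfrozen_off_end w L c \<delta>"
  shows "path_reconf (Suc w) L \<gamma> \<delta>"
proof -
  have restrict: "path_col w (remove_colour L u c) \<epsilon>" "\<exists>v<w. movable w (remove_colour L u c) \<epsilon> v"
    if "unfrozen_off_end w L c \<epsilon>" for \<epsilon>
  proof -
    from that obtain v where \<epsilon>: "path_col (Suc w) L \<epsilon>" "\<epsilon> w = c" "v < w" "movable (Suc w) L \<epsilon> v"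
      unfolding unfrozen_off_end_def by blast
    show "path_col w (remove_colour L u c) \<epsilon>"
      using path_col_remove_last[OF \<epsilon>(1)] \<epsilon>(2) by simp
    have "movable w (remove_colour L u c) \<epsilon> v"
      using movable_remove_last[OF \<epsilon>(4)] \<epsilon>(2,3) by (simp add: less_Suc_eq_le)
    then show "\<exists>v<w. movable w (remove_colour L u c) \<epsilon> v"
      using \<epsilon>(3) by blast
  qed
  have "path_reconf w (remove_colour L u c) \<gamma> \<delta>"
    using shorter_paths[OF deg_plus_one_remove_last[OF deg_plus_one_lists] many
        restrict(1)[OF \<gamma>] restrict(1)[OF \<delta>] restrict(2)[OF \<gamma>] restrict(2)[OF \<delta>]] .
  moreover have "c \<in> L w" "\<gamma> w = c" "\<delta> w = c"
    using \<gamma> \<delta> unfolding unfrozen_off_end_def path_col_iff by auto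
  ultimately show ?thesis by (rule path_reconf_lift_last)
qed

lemma many_colours_remove_shared:
  assumes "c \<in> L m"
  shows "4 \<le> card (\<Union>v<w. remove_colour L u c v)"
proof -
  have "y \<in> (\<Union>v<w. remove_colour L u c v)" if v: "v < Suc w" and y: "y \<in> L v" for v y
  proof -
    consider "v < u" | "v = u \<or> v = w" using v by (auto simp: less_Suc_eq)
    then show ?thesis
    proof cases
      case 1
      then show ?thesis using y by (intro UN_I[of v]) auto
    next
      case 2
      then have "y \<in> L u" using y end_nested by auto
      then show ?thesis
        using assms by (cases "y = c") (auto intro: UN_I[of m] UN_I[of u])
    qed
  qed
  then have "(\<Union>v<Suc w. L v) \<subseteq> (\<Union>v<w. remove_colour L u c v)"
    by blast
  moreover have "finite (\<Union>v<w. remove_colour L u c v)"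
    using finite_lists by simp
  ultimately have "card (\<Union>v<Suc w. L v) \<le> card (\<Union>v<w. remove_colour L u c v)"
    by (simp add: card_mono)
  then show ?thesis using many_colours by linarith
qed

lemma many_colours_remove_private:
  assumes "c' \<in> L w" "c' \<noteq> c" "c' \<notin> L m"
  shows "4 \<le> card (\<Union>v<w. remove_colour L u c v)"
proof -
  have "c' \<in> (\<Union>v<w. remove_colour L u c v)"
    using assms(1,2) end_nested by (intro UN_I[of u]) auto
  moreover have "L m \<subseteq> (\<Union>v<w. remove_colour L u c v)"
    by (intro subsetI UN_I[of m]) auto
  moreover have "finite (\<Union>v<w. remove_colour L u c v)"
    using finite_lists by simp
  ultimately have "card (insert c' (L m)) \<le> card (\<Union>v<w. remove_colour L u c v)"
    by (simp add: card_mono)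
  moreover have "card (insert c' (L m)) = 4"
    using card_m assms(3) finite_lists[of m] by simp
  ultimately show ?thesis by linarith
qed

text \<open>As \<open>x \<notin> L m\<close>, once \<open>w\<close> has left colour \<open>x\<close> the vertex \<open>u\<close> can take it.\<close>

lemma switch_end_colour:
  assumes x: "x \<in> L w" "x' \<in> L w" "x \<noteq> x'" "x \<notin> L m"
    and \<gamma>: "unfrozen_off_end w L x \<gamma>"
  shows "\<exists>\<delta>. unfrozen_off_end w L x' \<delta> \<and> path_reconf (Suc w) L \<gamma> \<delta>"
proof -
  obtain v where \<gamma>_col: "path_col (Suc w) L \<gamma>" and "\<gamma> w = x" "v < w" "movable (Suc w) L \<gamma> v"
    using \<gamma> unfolding unfrozen_off_end_def by blast
  then obtain \<gamma>1 where \<gamma>1: "path_reconf (Suc w) L \<gamma> \<gamma>1" "movable (Suc w) L \<gamma>1 u" "\<gamma>1 w = x"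
    using path_reconf_shift_movable_to[OF deg_plus_one_lists, of v u \<gamma>] by auto
  have \<gamma>1_col: "path_col (Suc w) L \<gamma>1"
    using reconf_L_colouring[OF \<gamma>1(1) \<gamma>_col] .
  obtain s where s: "admissible (Suc w) L \<gamma>1 u s" "s \<noteq> \<gamma>1 u"
    using \<gamma>1(2) unfolding movable_def by blast
  define \<gamma>2 where "\<gamma>2 = (if \<gamma>1 u = x' then \<gamma>1(u := s) else \<gamma>1)"
  have \<gamma>2: "path_reconf (Suc w) L \<gamma>1 \<gamma>2" "path_col (Suc w) L \<gamma>2"
    using path_reconf_upd[OF \<gamma>1_col _ s(1)] path_col_upd[OF \<gamma>1_col s(1)] reconf_refl \<gamma>1_col
    unfolding \<gamma>2_def by auto
  have "\<gamma>2 u \<noteq> x'" "\<gamma>2 w = x"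
    using s(2) \<gamma>1(3) unfolding \<gamma>2_def by auto
  then have "\<gamma>2 u \<noteq> x"
    using \<gamma>2(2) unfolding path_col_iff by force
  have "admissible (Suc w) L \<gamma>2 w x'"
    using x(2) \<open>\<gamma>2 u \<noteq> x'\<close> unfolding admissible_def by simp
  then have \<delta>: "path_reconf (Suc w) L \<gamma>2 (\<gamma>2(w := x'))" "path_col (Suc w) L (\<gamma>2(w := x'))"
    using path_reconf_upd[OF \<gamma>2(2)] path_col_upd[OF \<gamma>2(2)] by auto
  have "\<gamma>2 m \<noteq> x"
    using \<gamma>2(2) x(4) unfolding path_col_iff by force
  then have "admissible (Suc w) L (\<gamma>2(w := x')) u x"
    using x(1,3) end_nested unfolding admissible_def by auto
  then have "movable (Suc w) L (\<gamma>2(w := x')) u"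
    using \<open>\<gamma>2 u \<noteq> x\<close> unfolding movable_def by auto
  then have "unfrozen_off_end w L x' (\<gamma>2(w := x'))"
    using \<delta>(2) unfolding unfrozen_off_end_def by auto
  moreover have "path_reconf (Suc w) L \<gamma> (\<gamma>2(w := x'))"
    using reconf_trans[OF reconf_trans[OF \<gamma>1(1) \<gamma>2(1)] \<delta>(1)] .
  ultimately show ?thesis by blast
qed

lemma linked_end_colours:
  assumes \<theta>: "path_col (Suc w) L \<theta>" "\<theta> w = p" "q \<in> L w" "\<theta> u \<noteq> q"
    and v: "v < w" "movable (Suc w) L \<theta> v" "movable (Suc w) L (\<theta>(w := q)) v"
  shows "unfrozen_off_end w L p \<theta>" "unfrozen_off_end w L q (\<theta>(w := q))"
    and "path_reconf (Suc w) L \<theta> (\<theta>(w := q))"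
proof -
  have "admissible (Suc w) L \<theta> w q"
    using \<theta>(3,4) unfolding admissible_def by simp
  then show "path_reconf (Suc w) L \<theta> (\<theta>(w := q))" "unfrozen_off_end w L q (\<theta>(w := q))"
    using path_reconf_upd[OF \<theta>(1)] path_col_upd[OF \<theta>(1)] v unfolding unfrozen_off_end_def by auto
  show "unfrozen_off_end w L p \<theta>"
    using \<theta>(1,2) v(1,2) unfolding unfrozen_off_end_def by blast
qed

lemma shared_end_colours_linked:
  assumes pq: "L w = {p, q}" "p \<noteq> q" "p \<in> L m" "q \<in> L m"
  obtains \<theta> \<theta>' where "unfrozen_off_end w L p \<theta>" "unfrozen_off_end w L q \<theta>'"
    and "path_reconf (Suc w) L \<theta> \<theta>'"
proof -
  have "card {p, q} < card (L u)" using card_u pq(2) by simp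
  then obtain r where r: "r \<in> L u" "r \<noteq> p" "r \<noteq> q"
    using ex_not_in_of_card_less[of "{p, q}" "L u"] by auto
  have pq_u: "p \<in> L u" "q \<in> L u" using pq(1) end_nested by auto
  have long_lists: "\<forall>v<k. 2 \<le> card (L v)" if "k \<le> w" for k
    using two_le_card_lists that by simp
  consider (x) x where "x \<in> L m" "x \<notin> {p, q, r}"
    | (y) y where "y \<in> L t" "y \<notin> {p, q}"
    | (neither) "L m \<subseteq> {p, q, r}" "L t \<subseteq> {p, q}"
    by blast
  then show thesis
  proof cases
    case (x x)
    let ?\<theta> = "\<lambda>i. if i = w then p else if i = u then r else x"
    have "v = m \<or> v = u \<or> v = w" if "m \<le> v" "v < Suc w" for v
      using that by linarith
    then obtain \<theta> where \<theta>: "path_col (Suc w) L \<theta>" "\<forall>v. m \<le> v \<longrightarrow> \<theta> v = ?\<theta> v"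
      using extend_path_colouring[OF long_lists, of m "Suc w" ?\<theta>] x r pq(1) by fastforce
    then have "\<theta> m = x" "\<theta> u = r" "\<theta> w = p" by auto
    then have "admissible (Suc w) L \<theta> u q" "admissible (Suc w) L (\<theta>(w := q)) u p"
      using x r pq(2) pq_u unfolding admissible_def by auto
    then have mv: "movable (Suc w) L \<theta> u" "movable (Suc w) L (\<theta>(w := q)) u"
      using \<open>\<theta> u = r\<close> r unfolding movable_def by auto
    show thesis
      using that linked_end_colours[OF \<theta>(1) \<open>\<theta> w = p\<close> _ _ _ mv] pq(1) \<open>\<theta> u = r\<close> r by simp
  next
    case (y y)
    let ?\<theta> = "\<lambda>i. if i = w then p else if i = u then r else if i = m then q else y"
    have "v = t \<or> v = m \<or> v = u \<or> v = w" if "t \<le> v" "v < Suc w" for v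
      using that by linarith
    then obtain \<theta> where \<theta>: "path_col (Suc w) L \<theta>" "\<forall>v. t \<le> v \<longrightarrow> \<theta> v = ?\<theta> v"
      using extend_path_colouring[OF long_lists, of t "Suc w" ?\<theta>] y r pq by fastforce
    then have "\<theta> t = y" "\<theta> m = q" "\<theta> u = r" "\<theta> w = p" by auto
    then have "admissible (Suc w) L \<theta> m p" "admissible (Suc w) L (\<theta>(w := q)) m p"
      using y r pq unfolding admissible_def by auto
    then have mv: "movable (Suc w) L \<theta> m" "movable (Suc w) L (\<theta>(w := q)) m"
      using \<open>\<theta> m = q\<close> pq(2) unfolding movable_def by auto
    show thesis
      using that linked_end_colours[OF \<theta>(1) \<open>\<theta> w = p\<close> _ _ _ mv] pq(1) \<open>\<theta> u = r\<close> r by simp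
  next
    case neither
    have "t = 0"
    proof (rule ccontr)
      assume "t \<noteq> 0"
      then have "card (L t) = 3" using card_lists[of t] by (simp add: path_degree_def)
      moreover have "card (L t) \<le> card {p, q}" using neither(2) by (simp add: card_mono)
      ultimately show False using pq(2) by simp
    qed
    have "{p, q, r} \<subseteq> L u" using r pq_u by auto
    moreover have "card {p, q, r} = card (L u)" using card_u r pq(2) by simp
    moreover have "finite (L u)" using finite_lists by simp
    ultimately have "L u = {p, q, r}"
      using card_subset_eq[of "L u" "{p, q, r}"] by simp
    then have "L v \<subseteq> {p, q, r}" if "v < Suc w" for v
      using that neither pq(1) \<open>t = 0\<close> by (auto simp: less_Suc_eq)
    then have "card (\<Union>v<Suc w. L v) \<le> card {p, q, r}"
      by (intro card_mono) auto
    then show thesis using many_colours by (simp add: card_insert_if split: if_splits)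
  qed
qed

lemma end_colour_in_list: "unfrozen_off_end w L c \<gamma> \<Longrightarrow> c \<in> L w"
  unfolding unfrozen_off_end_def path_col_iff by auto

lemma unfrozen_off_end_connected_if_private:
  assumes pq: "L w = {p, q}" "p \<noteq> q" "q \<notin> L m"
    and \<gamma>: "unfrozen_off_end w L c \<gamma>" and \<delta>: "unfrozen_off_end w L c' \<delta>"
  shows "path_reconf (Suc w) L \<gamma> \<delta>"
proof -
  have to_p: "\<exists>\<epsilon>. unfrozen_off_end w L p \<epsilon> \<and> path_reconf (Suc w) L \<zeta> \<epsilon>"
    if "unfrozen_off_end w L d \<zeta>" for d \<zeta>
  proof -
    have "d = p \<or> d = q" using end_colour_in_list[OF that] pq(1) by auto
    then show ?thesis
    proof
      assume "d = p"
      then show ?thesis using that reconf_refl by blast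
    next
      assume "d = q"
      then show ?thesis using switch_end_colour[of q p \<zeta>] that pq by auto
    qed
  qed
  obtain \<gamma>' \<delta>' where "unfrozen_off_end w L p \<gamma>'" "path_reconf (Suc w) L \<gamma> \<gamma>'"
    and "unfrozen_off_end w L p \<delta>'" "path_reconf (Suc w) L \<delta> \<delta>'"
    using to_p[OF \<gamma>] to_p[OF \<delta>] by blast
  moreover have "4 \<le> card (\<Union>v<w. remove_colour L u p v)"
    using many_colours_remove_shared many_colours_remove_private[of q p] pq by auto
  ultimately have "path_reconf (Suc w) L \<gamma>' \<delta>'"
    using unfrozen_off_end_connected by blast
  then show ?thesis
    using reconf_trans[OF reconf_trans[OF \<open>path_reconf (Suc w) L \<gamma> \<gamma>'\<close>] reconf_sym]
      \<open>path_reconf (Suc w) L \<delta> \<delta>'\<close> by blast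
qed

lemma unfrozen_off_end_connected_if_shared:
  assumes pq: "L w = {p, q}" "p \<noteq> q" "p \<in> L m" "q \<in> L m"
    and \<gamma>: "unfrozen_off_end w L c \<gamma>" and \<delta>: "unfrozen_off_end w L c' \<delta>"
  shows "path_reconf (Suc w) L \<gamma> \<delta>"
proof -
  obtain \<theta> \<theta>' where \<theta>: "unfrozen_off_end w L p \<theta>" "unfrozen_off_end w L q \<theta>'"
    and \<theta>\<theta>': "path_reconf (Suc w) L \<theta> \<theta>'"
    using shared_end_colours_linked[OF pq] .
  have to_\<theta>: "path_reconf (Suc w) L \<zeta> \<theta>" if "unfrozen_off_end w L d \<zeta>" for d \<zeta>
  proof -
    have "d = p \<or> d = q" using end_colour_in_list[OF that] pq(1) by auto
    then show ?thesis
    proof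
      assume "d = p"
      then show ?thesis
        using unfrozen_off_end_connected[OF many_colours_remove_shared[OF pq(3)] that[unfolded \<open>d = p\<close>] \<theta>(1)]
        by simp
    next
      assume "d = q"
      then have "path_reconf (Suc w) L \<zeta> \<theta>'"
        using unfrozen_off_end_connected[OF many_colours_remove_shared[OF pq(4)] that[unfolded \<open>d = q\<close>] \<theta>(2)]
        by simp
      then show ?thesis using reconf_trans[OF _ reconf_sym[OF \<theta>\<theta>']] by blast
    qed
  qed
  show ?thesis using reconf_trans[OF to_\<theta>[OF \<gamma>] reconf_sym[OF to_\<theta>[OF \<delta>]]] .
qed

theorem path_reconf_tight:
  assumes "path_col (Suc w) L \<alpha>" "\<exists>v<Suc w. movable (Suc w) L \<alpha> v"
    and "path_col (Suc w) L \<beta>" "\<exists>v<Suc w. movable (Suc w) L \<beta> v"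
  shows "path_reconf (Suc w) L \<alpha> \<beta>"
proof -
  obtain c \<gamma> d \<delta> where \<gamma>: "unfrozen_off_end w L c \<gamma>" "path_reconf (Suc w) L \<alpha> \<gamma>"
    and \<delta>: "unfrozen_off_end w L d \<delta>" "path_reconf (Suc w) L \<beta> \<delta>"
    using reach_unfrozen_off_end assms by meson
  obtain p q where pq: "L w = {p, q}" "p \<noteq> q"
    using card_w by (meson card_2_iff)
  have "path_reconf (Suc w) L \<gamma> \<delta>"
  proof (cases "p \<in> L m \<and> q \<in> L m")
    case True
    then show ?thesis using unfrozen_off_end_connected_if_shared pq \<gamma>(1) \<delta>(1) by blast
  next
    case False
    then consider "q \<notin> L m" | "p \<notin> L m" by blast
    then show ?thesis
      using unfrozen_off_end_connected_if_private[OF _ _ _ \<gamma>(1) \<delta>(1)] pq by (metis insert_commute)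
  qed
  then show ?thesis using reconf_trans[OF reconf_trans[OF \<gamma>(2)] reconf_sym[OF \<delta>(2)]] by blast
qed

end

lemma list_assignment_cases:
  assumes L: "deg_plus_one (Suc (Suc k)) L"
  obtains (rich) r where "r < Suc (Suc k)" "path_degree (Suc (Suc k)) r + 2 \<le> card (L r)"
    | (private_end) p where "p \<in> L (Suc k)" "p \<notin> L k"
    | (private_start) p where "p \<in> L 0" "p \<notin> L 1"
    | (tight) "\<And>v. v < Suc (Suc k) \<Longrightarrow> card (L v) = path_degree (Suc (Suc k)) v + 1"
      "L (Suc k) \<subseteq> L k" "L 0 \<subseteq> L 1"
proof -
  have "card (L v) = path_degree (Suc (Suc k)) v + 1"
    if "v < Suc (Suc k)" "\<not> path_degree (Suc (Suc k)) v + 2 \<le> card (L v)" for v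
  proof -
    have "path_degree (Suc (Suc k)) v + 1 \<le> card (L v)"
      using L that(1) unfolding deg_plus_one_def by blast
    then show ?thesis using that(2) by linarith
  qed
  then show thesis using that by blast
qed

lemma few_colours_tight_three:
  assumes "\<And>v. v < 3 \<Longrightarrow> card (L v) = path_degree 3 v + 1" "L 2 \<subseteq> L 1" "L 0 \<subseteq> L 1"
  shows "card (\<Union>v<3. L v) \<le> 3"
proof -
  have "(\<Union>v<3. L v) = L 1"
    using assms(2,3) by (auto simp: less_Suc_eq numeral_3_eq_3 numeral_2_eq_2)
  moreover have "card (L 1) = 3"
    using assms(1)[of 1] by (simp add: path_degree_def)
  ultimately show ?thesis by simp
qed

theorem path_reconf_unfrozen:
  fixes L :: "nat \<Rightarrow> 'c set"
  assumes "3 \<le> n" "deg_plus_one n L" "4 \<le> card (\<Union>v<n. L v)"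
    and "path_col n L \<alpha>" "\<exists>v<n. movable n L \<alpha> v"
    and "path_col n L \<beta>" "\<exists>v<n. movable n L \<beta> v"
  shows "path_reconf n L \<alpha> \<beta>"
  using assms
proof (induction n arbitrary: L \<alpha> \<beta> rule: less_induct)
  case (less n)
  define k where "k = n - 2"
  have n: "n = Suc (Suc k)" "1 \<le> k"
    using less.prems(1) unfolding k_def by arith+
  note prems = less.prems[unfolded n]
  from prems(2) show ?case
  proof (cases rule: list_assignment_cases)
    case (rich r)
    show ?thesis unfolding n by (rule path_reconf_of_rich_vertex[OF prems(2) rich prems(4,6)])
  next
    case (private_end p)
    show ?thesis unfolding n by (rule path_reconf_of_private_end_colour[OF prems(2) private_end prems(4,6)])
  next
    case (private_start p)
    show ?thesis unfolding n by (rule path_reconf_of_private_start_colour[OF prems(2) private_start prems(4,6)])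
  next
    case tight
    have "k \<noteq> 1"
    proof
      assume "k = 1"
      then have "card (\<Union>v<3. L v) \<le> 3"
        using tight by (intro few_colours_tight_three) (simp_all add: numeral_3_eq_3 numeral_2_eq_2)
      then show False using prems(3) \<open>k = 1\<close> by (simp add: numeral_3_eq_3)
    qed
    define t where "t = k - 2"
    have t: "k = Suc (Suc t)"
      using \<open>k \<noteq> 1\<close> n(2) unfolding t_def by arith
    have "tight_path t L"
    proof
      show "path_reconf (Suc (Suc (Suc t))) L' \<alpha>' \<beta>'"
        if "deg_plus_one (Suc (Suc (Suc t))) L'" "4 \<le> card (\<Union>v<Suc (Suc (Suc t)). L' v)"
          "path_col (Suc (Suc (Suc t))) L' \<alpha>'" "path_col (Suc (Suc (Suc t))) L' \<beta>'"
          "\<exists>v<Suc (Suc (Suc t)). movable (Suc (Suc (Suc t))) L' \<alpha>' v"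
          "\<exists>v<Suc (Suc (Suc t)). movable (Suc (Suc (Suc t))) L' \<beta>' v"
        for L' :: "nat \<Rightarrow> 'c set" and \<alpha>' \<beta>'
        using less.IH[of "Suc (Suc (Suc t))" L' \<alpha>' \<beta>'] that n t by simp
    qed (use tight prems(3) t in simp_all)
    then show ?thesis
      unfolding n t by (rule tight_path.path_reconf_tight[OF _ prems(4-7)[unfolded t]])
  qed
qed

theorem mainTheorem13:
  fixes n :: nat and L :: "nat \<Rightarrow> 'c set" and \<alpha> \<beta> :: "nat \<Rightarrow> 'c"
  assumes "n \<ge> 3"
    and "\<forall>v \<in> path_verts n. card (L v) \<ge> degree (path_verts n) (path_adj n) v + 1"
    and "L_colouring (path_verts n) (path_adj n) L \<alpha>"
    and "L_colouring (path_verts n) (path_adj n) L \<beta>"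
    and "unfrozen (path_verts n) (path_adj n) L \<alpha>"
    and "unfrozen (path_verts n) (path_adj n) L \<beta>"
    and "card (\<Union>v \<in> path_verts n. L v) \<ge> 4"
  shows "reconf (path_verts n) (path_adj n) L \<alpha> \<beta>"
proof (rule path_reconf_unfrozen)
  show "deg_plus_one n L"
    using assms(2) degree_path unfolding deg_plus_one_def path_verts_def by auto
  show "4 \<le> card (\<Union>v<n. L v)"
    using assms(7) by (simp add: path_verts_def atLeast0LessThan)
  show "\<exists>v<n. movable n L \<alpha> v" "\<exists>v<n. movable n L \<beta> v"
    using assms(5,6) unfolding unfrozen_path_iff .
qed (use assms(1,3,4) in simp_all)

end
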